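(* Let $k$ be an infinite Brauer field and let $d\ge 1$ be an integer that is not a multiple of the characteristic of $k$. There exists a constant $C(d)$ (depending on $d$ and $k$) such that every equation $a_1x_1^d+\cdots+a_nx_n^d=1$ with $a_1,\ldots,a_n\in k$ all nonzero and $n\ge C(d)$ has a solution $(x_1,\ldots,x_n)\in k^n$.
   Context: A field $k$ is a Brauer field if for every $d\ge 1$ there is a number $N_k(d)$ such that every equation $b_1y_1^d+\cdots+b_my_m^d=0$ with $m>N_k(d)$ and $b_i\in k$ has a non-trivial solution in $k^m$. *)

theory Defs
  imports Main
begin

definition brauer_field :: "'k::field itself \<Rightarrow> bool" where
  "brauer_field _ \<longleftrightarrow>
     (\<forall>d::nat. d \<ge> 1 \<longrightarrow> (\<exists>N::nat. \<forall>m>N. \<forall>b::nat \<Rightarrow> 'k.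
        \<exists>y::nat \<Rightarrow> 'k. (\<exists>i<m. y i \<noteq> 0) \<and> (\<Sum>i<m. b i * y i ^ d) = 0))"

end

theory Submission
  imports Defs "HOL-Computational_Algebra.Polynomial"
begin

text \<open>
  Call \<open>\<mu>\<^sub>e = \<Sum> a\<^sub>i y\<^sub>i\<^sup>d \<tau>\<^sub>i\<^sup>e\<close> the \<open>e\<close>-th moment of the points \<open>\<tau>\<^sub>i\<close> with weights \<open>a\<^sub>i y\<^sub>i\<^sup>d\<close>.
  If \<open>\<mu>\<^sub>0 = \<dots> = \<mu>\<^sub>d\<^sub>-\<^sub>2 = 0 \<noteq> \<mu>\<^sub>d\<^sub>-\<^sub>1\<close>, then by the binomial theorem
  \<open>\<Sum> a\<^sub>i (y\<^sub>i (\<tau>\<^sub>i + c))\<^sup>d = d c \<mu>\<^sub>d\<^sub>-\<^sub>1 + \<mu>\<^sub>d\<close>, which is \<open>1\<close> for a suitable \<open>c\<close>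
  as soon as \<open>d \<noteq> 0\<close> in \<open>k\<close>.
  Such \<open>y, \<tau>\<close> exist once \<open>n\<close> is large, by induction on the number \<open>j\<close> of vanishing
  moments: split the variables into \<open>N + 1\<close> blocks, each with \<open>j\<close> vanishing moments,
  use the Brauer property to find a nontrivial zero \<open>s\<close> of the diagonal form whose
  coefficients are the \<open>j\<close>-th moments of the blocks, and rescale the blocks by \<open>s\<close>;
  rescaling one block by a generic element \<open>\<rho>\<close> of the infinite field keeps
  \<open>\<mu>\<^sub>j = 0\<close> but prevents \<open>\<mu>\<^sub>d\<^sub>-\<^sub>1\<close> from cancelling.
\<close>

definition weighted_moment ::
  "nat \<Rightarrow> nat \<Rightarrow> (nat \<Rightarrow> 'k::comm_semiring_1) \<Rightarrow> (nat \<Rightarrow> 'k) \<Rightarrow> (nat \<Rightarrow> 'k) \<Rightarrow> nat \<Rightarrow> 'k"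
  where "weighted_moment n d a y \<tau> e = (\<Sum>i<n. a i * y i ^ d * \<tau> i ^ e)"

definition low_moments_vanish :: "'k::field itself \<Rightarrow> nat \<Rightarrow> nat \<Rightarrow> nat \<Rightarrow> bool" where
  "low_moments_vanish _ d j n \<longleftrightarrow>
     (\<forall>a::nat \<Rightarrow> 'k. (\<forall>i<n. a i \<noteq> 0) \<longrightarrow>
        (\<exists>y \<tau>. (\<forall>e<j. weighted_moment n d a y \<tau> e = 0) \<and> weighted_moment n d a y \<tau> (d - 1) \<noteq> 0))"

lemma low_moments_vanish_0: "low_moments_vanish TYPE('k::field) d 0 1"
  unfolding low_moments_vanish_def weighted_moment_def by (auto intro!: exI[of _ "\<lambda>_. 1"])

lemma weighted_moment_blocks:
  "weighted_moment (M * C) d a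
     (\<lambda>k. \<sigma> (k div C) * Y (k div C) (k mod C)) (\<lambda>k. \<theta> (k div C) * T (k div C) (k mod C)) e =
   (\<Sum>\<gamma><M. \<sigma> \<gamma> ^ d * \<theta> \<gamma> ^ e * weighted_moment C d (\<lambda>i. a (\<gamma> * C + i)) (Y \<gamma>) (T \<gamma>) e)"
proof -
  have block: "(\<Sum>k\<in>{\<gamma> * C..<\<gamma> * C + C}. g k) = (\<Sum>i<C. g (\<gamma> * C + i))" for g :: "nat \<Rightarrow> 'a" and \<gamma>
    using sum.shift_bounds_nat_ivl[of g 0 "\<gamma> * C" C] by (simp add: lessThan_atLeast0 add.commute)
  show ?thesis
    unfolding weighted_moment_def sum.nat_group[symmetric] block sum_distrib_left
    by (intro sum.cong refl) (simp add: power_mult_distrib algebra_simps)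
qed

lemma ex_nonzero_non_root:
  fixes p :: "'k::idom poly"
  assumes "infinite (UNIV :: 'k set)" and "p \<noteq> 0"
  obtains \<rho> where "\<rho> \<noteq> 0" and "poly p \<rho> \<noteq> 0"
proof -
  have "finite (insert 0 {x. poly p x = 0})"
    using poly_roots_finite[OF assms(2)] by simp
  then obtain \<rho> where "\<rho> \<notin> insert 0 {x. poly p x = 0}"
    using ex_new_if_finite[OF assms(1)] by blast
  then show thesis using that by blast
qed

lemma rescale_blocks:
  fixes \<mu> :: "nat \<Rightarrow> nat \<Rightarrow> 'k::idom"
  assumes inf: "infinite (UNIV :: 'k set)" and "j < d - 1"
    and \<gamma>0: "\<gamma>0 < M" "s \<gamma>0 \<noteq> 0" "\<mu> \<gamma>0 (d - 1) \<noteq> 0"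
    and s: "(\<Sum>\<gamma><M. \<mu> \<gamma> j * s \<gamma> ^ d) = 0"
  obtains \<sigma> \<theta> where "(\<Sum>\<gamma><M. \<sigma> \<gamma> ^ d * \<theta> \<gamma> ^ j * \<mu> \<gamma> j) = 0"
    and "(\<Sum>\<gamma><M. \<sigma> \<gamma> ^ d * \<theta> \<gamma> ^ (d - 1) * \<mu> \<gamma> (d - 1)) \<noteq> 0"
proof -
  define A where "A = (\<Sum>\<gamma>\<in>{..<M} - {\<gamma>0}. s \<gamma> ^ d * \<mu> \<gamma> (d - 1))"
  define B where "B = s \<gamma>0 ^ d * \<mu> \<gamma>0 (d - 1)"
  define K where "K = d * (d - 1 - j)"
  have "K \<noteq> 0" using \<open>j < d - 1\<close> by (auto simp: K_def)
  have "d - 1 = j + (d - 1 - j)" using \<open>j < d - 1\<close> by simp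
  then have dK: "d * (d - 1) = j * d + K" by (metis K_def add_mult_distrib2 mult.commute)
  have "B \<noteq> 0" using \<gamma>0 by (simp add: B_def)
  with \<open>K \<noteq> 0\<close> have "coeff ([:A:] + monom B K) K \<noteq> 0" by (cases K) (auto simp: coeff_monom)
  then have "[:A:] + monom B K \<noteq> 0" by (metis coeff_0)
  then obtain \<rho> where "\<rho> \<noteq> 0" and "poly ([:A:] + monom B K) \<rho> \<noteq> 0"
    by (rule ex_nonzero_non_root[OF inf])
  then have AB: "A + B * \<rho> ^ K \<noteq> 0" by (simp add: poly_monom)
  \<comment> \<open>\<open>\<sigma>\<^sub>\<gamma>\<^sup>d \<theta>\<^sub>\<gamma>\<^sup>e = \<rho>\<^sup>j\<^sup>d s\<^sub>\<gamma>\<^sup>d \<theta>\<^sub>\<gamma>\<^sup>e\<^sup>-\<^sup>j\<close> for \<open>e \<ge> j\<close>, so only block \<open>\<gamma>0\<close> gains the factor \<open>\<rho>\<^sup>K\<close> at \<open>e = d - 1\<close>.\<close>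
  define \<sigma> where "\<sigma> \<gamma> = (if \<gamma> = \<gamma>0 then s \<gamma> else s \<gamma> * \<rho> ^ j)" for \<gamma>
  define \<theta> where "\<theta> \<gamma> = (if \<gamma> = \<gamma>0 then \<rho> ^ d else 1)" for \<gamma>
  have weight_j: "\<sigma> \<gamma> ^ d * \<theta> \<gamma> ^ j = \<rho> ^ (j * d) * s \<gamma> ^ d" for \<gamma>
    by (auto simp: \<sigma>_def \<theta>_def power_mult_distrib power_mult[symmetric] mult.commute)
  have weight_top: "\<sigma> \<gamma> ^ d * \<theta> \<gamma> ^ (d - 1) =
      \<rho> ^ (j * d) * (if \<gamma> = \<gamma>0 then \<rho> ^ K else 1) * s \<gamma> ^ d" for \<gamma>
    using dK by (auto simp: \<sigma>_def \<theta>_def power_mult_distrib power_mult[symmetric] power_add mult.commute)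
  show thesis
  proof (rule that)
    have "(\<Sum>\<gamma><M. \<sigma> \<gamma> ^ d * \<theta> \<gamma> ^ j * \<mu> \<gamma> j) = \<rho> ^ (j * d) * (\<Sum>\<gamma><M. \<mu> \<gamma> j * s \<gamma> ^ d)"
      by (simp add: weight_j sum_distrib_left mult_ac)
    then show "(\<Sum>\<gamma><M. \<sigma> \<gamma> ^ d * \<theta> \<gamma> ^ j * \<mu> \<gamma> j) = 0"
      using s by simp
    have "(\<Sum>\<gamma><M. \<sigma> \<gamma> ^ d * \<theta> \<gamma> ^ (d - 1) * \<mu> \<gamma> (d - 1)) =
        (\<Sum>\<gamma><M. \<rho> ^ (j * d) * (if \<gamma> = \<gamma>0 then \<rho> ^ K else 1) * s \<gamma> ^ d * \<mu> \<gamma> (d - 1))"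
      unfolding weight_top ..
    also have "\<dots> = \<rho> ^ (j * d) * (B * \<rho> ^ K + A)"
      using \<gamma>0(1) by (simp add: sum.remove A_def B_def sum_distrib_left algebra_simps)
    finally show "(\<Sum>\<gamma><M. \<sigma> \<gamma> ^ d * \<theta> \<gamma> ^ (d - 1) * \<mu> \<gamma> (d - 1)) \<noteq> 0"
      using \<open>\<rho> \<noteq> 0\<close> AB by (simp add: add.commute)
  qed
qed

lemma low_moments_vanish_Suc:
  assumes brauer: "brauer_field TYPE('k::field)" and inf: "infinite (UNIV :: 'k set)"
    and "j < d - 1" and C: "low_moments_vanish TYPE('k) d j C"
  shows "\<exists>n. low_moments_vanish TYPE('k) d (Suc j) n"
proof -
  have "d \<ge> 1" using \<open>j < d - 1\<close> by simp
  then obtain N where N: "\<forall>m>N. \<forall>b::nat \<Rightarrow> 'k. \<exists>s. (\<exists>i<m. s i \<noteq> 0) \<and> (\<Sum>i<m. b i * s i ^ d) = 0"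
    using brauer unfolding brauer_field_def by blast
  define M where "M = Suc N"
  have "low_moments_vanish TYPE('k) d (Suc j) (M * C)"
    unfolding low_moments_vanish_def
  proof (intro allI impI)
    fix a :: "nat \<Rightarrow> 'k"
    assume a: "\<forall>i<M * C. a i \<noteq> 0"
    have "\<forall>\<gamma><M. \<exists>y \<tau>. (\<forall>e<j. weighted_moment C d (\<lambda>i. a (\<gamma> * C + i)) y \<tau> e = 0) \<and>
        weighted_moment C d (\<lambda>i. a (\<gamma> * C + i)) y \<tau> (d - 1) \<noteq> 0"
    proof (intro allI impI)
      fix \<gamma> assume "\<gamma> < M"
      then have "Suc \<gamma> * C \<le> M * C" by (intro mult_le_mono1) simp
      then have "\<gamma> * C + i < M * C" if "i < C" for i
        using that by simp
      then show "\<exists>y \<tau>. (\<forall>e<j. weighted_moment C d (\<lambda>i. a (\<gamma> * C + i)) y \<tau> e = 0) \<and>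
          weighted_moment C d (\<lambda>i. a (\<gamma> * C + i)) y \<tau> (d - 1) \<noteq> 0"
        using C[unfolded low_moments_vanish_def, rule_format, of "\<lambda>i. a (\<gamma> * C + i)"] a by simp
    qed
    then obtain Y T where YT: "\<And>\<gamma>. \<gamma> < M \<Longrightarrow>
        (\<forall>e<j. weighted_moment C d (\<lambda>i. a (\<gamma> * C + i)) (Y \<gamma>) (T \<gamma>) e = 0) \<and>
        weighted_moment C d (\<lambda>i. a (\<gamma> * C + i)) (Y \<gamma>) (T \<gamma>) (d - 1) \<noteq> 0"
      by (metis (no_types))
    define \<mu> where "\<mu> \<gamma> = weighted_moment C d (\<lambda>i. a (\<gamma> * C + i)) (Y \<gamma>) (T \<gamma>)" for \<gamma>
    have low: "\<mu> \<gamma> e = 0" if "\<gamma> < M" "e < j" for \<gamma> e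
      using YT that by (simp add: \<mu>_def)
    have top: "\<mu> \<gamma> (d - 1) \<noteq> 0" if "\<gamma> < M" for \<gamma>
      using YT that by (simp add: \<mu>_def)
    obtain s where "\<exists>\<gamma><M. s \<gamma> \<noteq> 0" and s: "(\<Sum>\<gamma><M. \<mu> \<gamma> j * s \<gamma> ^ d) = 0"
      using N[rule_format, of M "\<lambda>\<gamma>. \<mu> \<gamma> j"] by (auto simp: M_def)
    then obtain \<gamma>0 where "\<gamma>0 < M" "s \<gamma>0 \<noteq> 0" by blast
    obtain \<sigma> \<theta> where rescaled_j: "(\<Sum>\<gamma><M. \<sigma> \<gamma> ^ d * \<theta> \<gamma> ^ j * \<mu> \<gamma> j) = 0"
      and rescaled_top: "(\<Sum>\<gamma><M. \<sigma> \<gamma> ^ d * \<theta> \<gamma> ^ (d - 1) * \<mu> \<gamma> (d - 1)) \<noteq> 0"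
      by (rule rescale_blocks[OF inf \<open>j < d - 1\<close> \<open>\<gamma>0 < M\<close> \<open>s \<gamma>0 \<noteq> 0\<close> top[OF \<open>\<gamma>0 < M\<close>] s])
    define y where "y k = \<sigma> (k div C) * Y (k div C) (k mod C)" for k
    define \<tau> where "\<tau> k = \<theta> (k div C) * T (k div C) (k mod C)" for k
    have moment: "weighted_moment (M * C) d a y \<tau> e = (\<Sum>\<gamma><M. \<sigma> \<gamma> ^ d * \<theta> \<gamma> ^ e * \<mu> \<gamma> e)" for e
      unfolding y_def \<tau>_def \<mu>_def by (rule weighted_moment_blocks)
    show "\<exists>y \<tau>. (\<forall>e<Suc j. weighted_moment (M * C) d a y \<tau> e = 0) \<and>
        weighted_moment (M * C) d a y \<tau> (d - 1) \<noteq> 0"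
    proof (intro exI conjI allI impI)
      fix e assume "e < Suc j"
      then show "weighted_moment (M * C) d a y \<tau> e = 0"
        unfolding moment using rescaled_j low by (cases "e = j") auto
    qed (use rescaled_top moment in simp)
  qed
  then show ?thesis ..
qed

lemma ex_low_moments_vanish:
  assumes "brauer_field TYPE('k::field)" and "infinite (UNIV :: 'k set)" and "j \<le> d - 1"
  shows "\<exists>n. low_moments_vanish TYPE('k) d j n"
  using \<open>j \<le> d - 1\<close>
proof (induction j)
  case 0
  show ?case using low_moments_vanish_0 by blast
next
  case (Suc j)
  then obtain C where "low_moments_vanish TYPE('k) d j C" by auto
  with Suc.prems show ?case using low_moments_vanish_Suc[OF assms(1,2)] by simp
qed

lemma low_moments_vanish_mono:
  assumes "low_moments_vanish TYPE('k::field) d j C" and "C \<le> n" and "d \<noteq> 0"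
  shows "low_moments_vanish TYPE('k) d j n"
  unfolding low_moments_vanish_def
proof (intro allI impI)
  fix a :: "nat \<Rightarrow> 'k"
  assume "\<forall>i<n. a i \<noteq> 0"
  with \<open>C \<le> n\<close> have "\<forall>i<C. a i \<noteq> 0" by auto
  then obtain y \<tau> where low: "\<forall>e<j. weighted_moment C d a y \<tau> e = 0"
    and top: "weighted_moment C d a y \<tau> (d - 1) \<noteq> 0"
    using assms(1)[unfolded low_moments_vanish_def, rule_format, of a] by blast
  define y' where "y' i = (if i < C then y i else 0)" for i
  have "weighted_moment n d a y' \<tau> e = weighted_moment C d a y \<tau> e" for e
  proof -
    have "weighted_moment n d a y' \<tau> e = weighted_moment C d a y' \<tau> e"
      unfolding weighted_moment_def using assms(2,3)
      by (intro sum.mono_neutral_right) (auto simp: y'_def)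
    then show ?thesis by (simp add: weighted_moment_def y'_def)
  qed
  with low top show "\<exists>y \<tau>. (\<forall>e<j. weighted_moment n d a y \<tau> e = 0) \<and> weighted_moment n d a y \<tau> (d - 1) \<noteq> 0"
    by (intro exI[of _ y'] exI[of _ \<tau>]) simp
qed

lemma diagonal_form_shift:
  fixes a y \<tau> :: "nat \<Rightarrow> 'k::comm_semiring_1"
  shows "(\<Sum>i<n. a i * (y i * (\<tau> i + c)) ^ d) =
    (\<Sum>e\<le>d. of_nat (d choose e) * c ^ (d - e) * weighted_moment n d a y \<tau> e)"
proof -
  have "a i * (y i * (\<tau> i + c)) ^ d =
      (\<Sum>e\<le>d. of_nat (d choose e) * c ^ (d - e) * (a i * y i ^ d * \<tau> i ^ e))" for i
  proof -
    have "a i * (y i * (\<tau> i + c)) ^ d = a i * y i ^ d * (\<tau> i + c) ^ d"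
      by (simp add: power_mult_distrib mult.assoc)
    also have "\<dots> = a i * y i ^ d * (\<Sum>e\<le>d. of_nat (d choose e) * \<tau> i ^ e * c ^ (d - e))"
      by (simp only: binomial_ring)
    finally show ?thesis by (simp add: sum_distrib_left algebra_simps)
  qed
  then show ?thesis
    unfolding weighted_moment_def sum_distrib_left by (simp add: sum.swap[of _ "{..<n}"])
qed

lemma low_moments_vanish_imp_represents_one:
  fixes a :: "nat \<Rightarrow> 'k::field"
  assumes "low_moments_vanish TYPE('k) d (d - 1) n" and "of_nat d \<noteq> (0::'k)"
    and "\<forall>i<n. a i \<noteq> 0"
  shows "\<exists>x. (\<Sum>i<n. a i * x i ^ d) = 1"
proof -
  obtain d' where d: "d = Suc d'" using \<open>of_nat d \<noteq> 0\<close> by (cases d) auto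
  obtain y \<tau> where low: "\<forall>e<d'. weighted_moment n d a y \<tau> e = 0"
    and top: "weighted_moment n d a y \<tau> d' \<noteq> 0"
    using assms(1,3) unfolding low_moments_vanish_def d by auto
  define \<mu> where "\<mu> = weighted_moment n d a y \<tau>"
  define c where "c = (1 - \<mu> d) / (of_nat d * \<mu> d')"
  have "(\<Sum>i<n. a i * (y i * (\<tau> i + c)) ^ d) = (\<Sum>e\<le>d. of_nat (d choose e) * c ^ (d - e) * \<mu> e)"
    unfolding \<mu>_def by (rule diagonal_form_shift)
  also have "\<dots> = (\<Sum>e<d'. of_nat (d choose e) * c ^ (d - e) * \<mu> e) + of_nat d * c * \<mu> d' + \<mu> d"
    unfolding d by (simp add: atMost_Suc lessThan_Suc_atMost[symmetric] del: lessThan_Suc_atMost)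
  also have "(\<Sum>e<d'. of_nat (d choose e) * c ^ (d - e) * \<mu> e) = 0"
    using low by (simp add: \<mu>_def)
  also have "of_nat d * c * \<mu> d' = 1 - \<mu> d"
    using top assms(2) by (simp add: c_def \<mu>_def)
  finally show ?thesis by auto
qed

theorem corollary1p5:
  assumes "brauer_field TYPE('k::field)"
    and "infinite (UNIV :: 'k set)"
    and "d \<ge> (1::nat)"
    and "\<not> CHAR('k) dvd d"
  shows "\<exists>C::nat. \<forall>n\<ge>C. \<forall>a::nat \<Rightarrow> 'k. (\<forall>i<n. a i \<noteq> 0) \<longrightarrow>
           (\<exists>x::nat \<Rightarrow> 'k. (\<Sum>i<n. a i * x i ^ d) = 1)"
proof -
  obtain C where C: "low_moments_vanish TYPE('k) d (d - 1) C"
    using ex_low_moments_vanish[OF assms(1,2)] by blast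
  have "of_nat d \<noteq> (0::'k)"
    using assms(4) by (simp add: of_nat_eq_0_iff_char_dvd)
  moreover have "d \<noteq> 0" using assms(3) by simp
  ultimately show ?thesis
    using low_moments_vanish_imp_represents_one low_moments_vanish_mono[OF C] by blast
qed

end
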